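(* For every $\gamma > 0$ and $0 < \alpha < 1$, the following holds for all sufficiently large $n$. Let $G$ be an $(n,(3-\gamma)n)$-multigraph and $M$ a rainbow matching of maximum size in $G$ which has a $7$-auxiliary matching $N$ of size at least $(1-\gamma)|M|$. Then $|N_\alpha| \le \frac{20\gamma}{1-\alpha}\, n$.
   Context: An $(n,v)$-multigraph is a multigraph whose edges are coloured with a set of $n$ colours (parallel edges allowed, with distinct colours) such that each colour class is a vertex-disjoint union of cliques on at least $2$ vertices which together have at least $v$ vertices. A rainbow matching is a matching whose edges have pairwise distinct colours. Let $V$ be the vertex set of $G$ and $C_0$ the set of colours not used on $M$. A $t$-auxiliary matching for $M$ is a matching $N$ each of whose edges has one endpoint in $V\setminus V(M)$ and the other in $V(M)$, such that for each edge of $N$ its pair of endpoints is joined by edges of at least $t$ distinct colours from $C_0$, and no two edges of $N$ intersect the same edge of $M$. $M_N\subseteq M$ is the set of edges of $M$ intersecting an edge of $N$; for $e\in M_N$, $x_e$ is the endpoint of $e$ in $V(N)$, $m(x_e)$ the other endpoint of $e$, and $v_e$ the vertex matched to $x_e$ in $N$; $C_N$ is the set of colours of edges of $M_N$. $N_\alpha \subseteq N$ is the set of edges $v_e x_e \in N$ such that the pair $v_e m(x_e)$ is joined by edges of at most $\alpha |C_N|$ distinct colours from $C_N$. *)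

theory Defs
  imports Complex_Main
begin

(* A coloured multigraph is given by a vertex set V, a colour set C and, for each
   colour c, the family K c of cliques forming colour class c. *)

definition has_edge :: "('c \<Rightarrow> 'v set set) \<Rightarrow> 'c \<Rightarrow> 'v \<Rightarrow> 'v \<Rightarrow> bool" where
  "has_edge K c x y \<longleftrightarrow> x \<noteq> y \<and> (\<exists>Q\<in>K c. x \<in> Q \<and> y \<in> Q)"

definition nv_multigraph :: "'v set \<Rightarrow> 'c set \<Rightarrow> ('c \<Rightarrow> 'v set set) \<Rightarrow> nat \<Rightarrow> real \<Rightarrow> bool" where
  "nv_multigraph V C K n v \<longleftrightarrow>
     finite V \<and> finite C \<and> card C = n \<and>
     (\<forall>c. c \<notin> C \<longrightarrow> K c = {}) \<and>
     (\<forall>c\<in>C. (\<forall>Q\<in>K c. Q \<subseteq> V \<and> card Q \<ge> 2) \<and>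
             (\<forall>Q\<in>K c. \<forall>Q'\<in>K c. Q \<noteq> Q' \<longrightarrow> Q \<inter> Q' = {}) \<and>
             real (card (\<Union>(K c))) \<ge> v)"

definition rainbow_matching :: "'c set \<Rightarrow> ('c \<Rightarrow> 'v set set) \<Rightarrow> ('v set \<times> 'c) set \<Rightarrow> bool" where
  "rainbow_matching C K M \<longleftrightarrow>
     (\<forall>(e, c)\<in>M. c \<in> C \<and> (\<exists>x y. e = {x, y} \<and> has_edge K c x y)) \<and>
     (\<forall>(e, c)\<in>M. \<forall>(e', c')\<in>M. (e, c) \<noteq> (e', c') \<longrightarrow> e \<inter> e' = {} \<and> c \<noteq> c')"

definition max_rainbow_matching :: "'c set \<Rightarrow> ('c \<Rightarrow> 'v set set) \<Rightarrow> ('v set \<times> 'c) set \<Rightarrow> bool" where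
  "max_rainbow_matching C K M \<longleftrightarrow> rainbow_matching C K M \<and>
     (\<forall>M'. rainbow_matching C K M' \<longrightarrow> card M' \<le> card M)"

definition matched_verts :: "('v set \<times> 'c) set \<Rightarrow> 'v set" where
  "matched_verts M = \<Union>(fst ` M)"

definition unused_colours :: "'c set \<Rightarrow> ('v set \<times> 'c) set \<Rightarrow> 'c set" where
  "unused_colours C M = C - snd ` M"

definition aux_matching :: "nat \<Rightarrow> 'v set \<Rightarrow> 'c set \<Rightarrow> ('c \<Rightarrow> 'v set set) \<Rightarrow>
    ('v set \<times> 'c) set \<Rightarrow> 'v set set \<Rightarrow> bool" where
  "aux_matching t V C K M N \<longleftrightarrow>
     (\<forall>f\<in>N. \<exists>u x. f = {u, x} \<and> u \<in> V - matched_verts M \<and> x \<in> matched_verts M \<and>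
               card {c \<in> unused_colours C M. has_edge K c u x} \<ge> t) \<and>
     (\<forall>f\<in>N. \<forall>f'\<in>N. f \<noteq> f' \<longrightarrow> f \<inter> f' = {}) \<and>
     (\<forall>f\<in>N. \<forall>f'\<in>N. f \<noteq> f' \<longrightarrow> \<not> (\<exists>e\<in>fst ` M. f \<inter> e \<noteq> {} \<and> f' \<inter> e \<noteq> {}))"

definition M_N :: "('v set \<times> 'c) set \<Rightarrow> 'v set set \<Rightarrow> ('v set \<times> 'c) set" where
  "M_N M N = {(e, c) \<in> M. \<exists>f\<in>N. f \<inter> e \<noteq> {}}"

definition C_N :: "('v set \<times> 'c) set \<Rightarrow> 'v set set \<Rightarrow> 'c set" where
  "C_N M N = snd ` M_N M N"

definition N_alpha :: "real \<Rightarrow> ('c \<Rightarrow> 'v set set) \<Rightarrow> ('v set \<times> 'c) set \<Rightarrow> 'v set set \<Rightarrow> 'v set set" where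
  "N_alpha \<alpha> K M N = {f \<in> N. \<exists>u x y. f = {u, x} \<and> u \<notin> matched_verts M \<and>
       {x, y} \<in> fst ` M \<and> x \<noteq> y \<and>
       real (card {c \<in> C_N M N. has_edge K c u y}) \<le> \<alpha> * real (card (C_N M N))}"

end

(*
  Let e = v_e x_e be an edge of N and c_e the colour of the M-edge at x_e.  Since M is a
  maximum rainbow matching and every edge of N offers 7 colours unused on M, colour c_e cannot
  join two vertices among those outside V(M) (except v_e) and the mates m(x_a), unless they form
  a pair v_a m(x_a): otherwise switching a few M-edges to their auxiliary edges and adding that
  edge of colour c_e would give a larger rainbow matching.  For the same reason no vertex x_a
  whose pair v_a m(x_a) is joined in at least three colours of C_N lies in a c_e-clique with
  such a vertex.  Writing L for the number of vertices of V(M) that are not mates, the colour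
  class of c_e therefore has at most 2 L + d_e + s_e + 2 vertices, where d_e (resp. s_e) counts
  the pairs v_a m(x_a) joined in colour c_e (and in at most two colours of C_N).  Summing over e
  and counting the pairs against their colours, each edge of N_alpha contributes at most
  alpha |N| to the sum, while every colour class has at least (3 - gamma) n vertices; as
  L + |N| <= 2 |M| and |N| >= (1 - gamma) |M|, this leaves room for at most
  (2 gamma n + 4) / (1 - alpha) edges in N_alpha.
*)

theory Submission
  imports Defs
begin

lemma has_edge_commute: "has_edge K c x y \<longleftrightarrow> has_edge K c y x"
  unfolding has_edge_def by blast

lemma card_le_card_if_unique_witness:
  assumes "finite B"
    and "\<And>a. a \<in> A \<Longrightarrow> \<exists>b\<in>B. R a b"
    and "\<And>a a' b. a \<in> A \<Longrightarrow> a' \<in> A \<Longrightarrow> R a b \<Longrightarrow> R a' b \<Longrightarrow> a = a'"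
  shows "card A \<le> card B"
proof -
  define g where "g a = (SOME b. b \<in> B \<and> R a b)" for a
  have g: "g a \<in> B \<and> R a (g a)" if "a \<in> A" for a
    unfolding g_def using assms(2)[OF that] by (metis (mono_tags, lifting) someI_ex)
  have "inj_on g A"
  proof (rule inj_onI)
    fix a a' assume "a \<in> A" "a' \<in> A" "g a = g a'"
    with g[of a] g[of a'] show "a = a'" using assms(3) by metis
  qed
  moreover have "g ` A \<subseteq> B" using g by blast
  ultimately show ?thesis using card_inj_on_le assms(1) by blast
qed

lemma sum_card_filter_swap:
  assumes "finite A" "finite B"
  shows "(\<Sum>x\<in>A. card {y\<in>B. R x y}) = (\<Sum>y\<in>B. card {x\<in>A. R x y})"
proof -
  have "(\<Sum>x\<in>A. card {y\<in>B. R x y}) = (\<Sum>x\<in>A. \<Sum>y\<in>B. of_bool (R x y))"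
    using assms by (simp add: Collect_conj_eq Int_commute)
  also have "\<dots> = (\<Sum>y\<in>B. \<Sum>x\<in>A. of_bool (R x y))"
    by (rule sum.swap)
  also have "\<dots> = (\<Sum>y\<in>B. card {x\<in>A. R x y})"
    using assms by (simp add: Collect_conj_eq Int_commute)
  finally show ?thesis .
qed

section \<open>Rainbow matchings\<close>

definition colours :: "('v set \<times> 'c) set \<Rightarrow> 'c set" where
  "colours M = snd ` M"

lemma colours_Un: "colours (A \<union> B) = colours A \<union> colours B"
  unfolding colours_def by (rule image_Un)

lemma matched_verts_Un: "matched_verts (A \<union> B) = matched_verts A \<union> matched_verts B"
  unfolding matched_verts_def by auto

lemma unused_colours_disjoint: "unused_colours C M \<inter> colours M = {}"
  unfolding unused_colours_def colours_def by blast

lemma rainbow_matchingI: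
  assumes "\<And>e c. (e, c) \<in> M \<Longrightarrow> c \<in> C \<and> (\<exists>x y. e = {x, y} \<and> has_edge K c x y)"
    and "\<And>p p'. p \<in> M \<Longrightarrow> p' \<in> M \<Longrightarrow> p \<noteq> p' \<Longrightarrow> fst p \<inter> fst p' = {} \<and> snd p \<noteq> snd p'"
  shows "rainbow_matching C K M"
  using assms unfolding rainbow_matching_def by fastforce

lemma rainbow_matching_edge:
  "rainbow_matching C K M \<Longrightarrow> (e, c) \<in> M \<Longrightarrow> c \<in> C \<and> (\<exists>x y. e = {x, y} \<and> has_edge K c x y)"
  unfolding rainbow_matching_def by fast

lemma rainbow_matching_disjoint:
  assumes "rainbow_matching C K M" "p \<in> M" "p' \<in> M" "p \<noteq> p'"
  shows "fst p \<inter> fst p' = {} \<and> snd p \<noteq> snd p'"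
proof -
  obtain e c e' c' where p: "p = (e, c)" "p' = (e', c')" by fastforce
  have "e \<inter> e' = {} \<and> c \<noteq> c'"
    using assms unfolding p rainbow_matching_def by fast
  then show ?thesis using p by simp
qed

lemma rainbow_matching_subset:
  assumes "rainbow_matching C K M" "M' \<subseteq> M"
  shows "rainbow_matching C K M'"
proof (rule rainbow_matchingI)
  fix e c assume "(e, c) \<in> M'"
  then show "c \<in> C \<and> (\<exists>x y. e = {x, y} \<and> has_edge K c x y)"
    using rainbow_matching_edge[OF assms(1)] assms(2) by blast
next
  fix p p' assume "p \<in> M'" "p' \<in> M'" "p \<noteq> p'"
  then show "fst p \<inter> fst p' = {} \<and> snd p \<noteq> snd p'"
    using rainbow_matching_disjoint[OF assms(1)] assms(2) by blast
qed

lemma rainbow_matching_singleton: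
  "c \<in> C \<Longrightarrow> has_edge K c x y \<Longrightarrow> rainbow_matching C K {({x, y}, c)}"
  unfolding rainbow_matching_def by auto

lemma rainbow_matching_Un:
  assumes "rainbow_matching C K A" "rainbow_matching C K B"
    and "matched_verts A \<inter> matched_verts B = {}" "colours A \<inter> colours B = {}"
  shows "rainbow_matching C K (A \<union> B)"
proof (rule rainbow_matchingI)
  fix e c assume "(e, c) \<in> A \<union> B"
  then show "c \<in> C \<and> (\<exists>x y. e = {x, y} \<and> has_edge K c x y)"
    using rainbow_matching_edge[OF assms(1)] rainbow_matching_edge[OF assms(2)] by blast
next
  fix p p' assume pp: "p \<in> A \<union> B" "p' \<in> A \<union> B" "p \<noteq> p'"
  have cross: "fst q \<inter> fst q' = {} \<and> snd q \<noteq> snd q'" if "q \<in> A" "q' \<in> B" for q q'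
    using that assms(3,4) unfolding matched_verts_def colours_def by blast
  show "fst p \<inter> fst p' = {} \<and> snd p \<noteq> snd p'"
  proof (cases "p \<in> A"; cases "p' \<in> A")
    assume "p \<in> A" "p' \<in> A"
    then show ?thesis using rainbow_matching_disjoint[OF assms(1)] pp(3) by blast
  next
    assume "p \<in> A" "p' \<notin> A"
    then show ?thesis using cross[of p p'] pp(2) by simp
  next
    assume "p \<notin> A" "p' \<in> A"
    then show ?thesis using cross[of p' p] pp(1) by (auto simp: Int_commute)
  next
    assume "p \<notin> A" "p' \<notin> A"
    then show ?thesis using rainbow_matching_disjoint[OF assms(2)] pp by blast
  qed
qed

lemma disjoint_if_colours_disjoint: "colours A \<inter> colours B = {} \<Longrightarrow> A \<inter> B = {}"
  unfolding colours_def by (metis disjoint_iff image_eqI)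

lemma rainbow_matching_inj_snd: "rainbow_matching C K M \<Longrightarrow> inj_on snd M"
  by (meson inj_onI rainbow_matching_disjoint)

lemma rainbow_matching_colours: "rainbow_matching C K M \<Longrightarrow> colours M \<subseteq> C"
  unfolding colours_def using rainbow_matching_edge by fastforce

lemma finite_rainbow_matching: "finite C \<Longrightarrow> rainbow_matching C K M \<Longrightarrow> finite M"
  by (metis colours_def finite_imageD finite_subset rainbow_matching_colours rainbow_matching_inj_snd)

lemma card_rainbow_matching_le: "finite C \<Longrightarrow> rainbow_matching C K M \<Longrightarrow> card M \<le> card C"
  by (metis colours_def card_image card_mono rainbow_matching_colours rainbow_matching_inj_snd)

lemma matched_verts_Diff_disjoint:
  "rainbow_matching C K M \<Longrightarrow> R \<subseteq> M \<Longrightarrow> matched_verts (M - R) \<inter> matched_verts R = {}"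
  unfolding matched_verts_def using rainbow_matching_disjoint by fastforce

lemma colours_Diff_disjoint:
  assumes "rainbow_matching C K M" "R \<subseteq> M"
  shows "colours (M - R) \<inter> colours R = {}"
proof -
  have "snd p \<noteq> snd q" if "p \<in> M - R" "q \<in> R" for p q
    using rainbow_matching_disjoint[OF assms(1), of p q] that assms(2) by blast
  then show ?thesis unfolding colours_def by blast
qed

lemma card_matched_verts_le:
  assumes "finite M" "rainbow_matching C K M"
  shows "card (matched_verts M) \<le> 2 * card M"
proof -
  have "card (matched_verts M) \<le> (\<Sum>p\<in>M. card (fst p))"
    unfolding matched_verts_def using card_UN_le[OF assms(1), of fst] by simp
  also have "\<dots> \<le> of_nat (card M) * 2"
  proof (rule sum_bounded_above)
    fix p assume "p \<in> M"
    then obtain x y where "fst p = {x, y}"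
      using rainbow_matching_edge[OF assms(2), of "fst p" "snd p"] by auto
    then show "card (fst p) \<le> 2" by (simp add: card_insert_if)
  qed
  finally show ?thesis by simp
qed

section \<open>Maximum rainbow matchings with an auxiliary matching\<close>

locale aux_matching_setting =
  fixes V :: "'v set" and C :: "'c set" and K :: "'c \<Rightarrow> 'v set set"
    and M :: "('v set \<times> 'c) set" and N :: "'v set set" and n :: nat and w :: real
  assumes multigraph: "nv_multigraph V C K n w"
    and max_M: "max_rainbow_matching C K M"
    and aux_N: "aux_matching 7 V C K M N"
begin

abbreviation VM where "VM \<equiv> matched_verts M"
abbreviation U where "U \<equiv> V - VM"
abbreviation C0 where "C0 \<equiv> unused_colours C M"

(* For f = v_e x_e in N with v_e outside V(M): v_of f = v_e, x_of f = x_e, edge_of f is the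
   edge e of M at x_e, m_of f = m(x_e) and colour_of f is the colour of e. *)
definition v_of :: "'v set \<Rightarrow> 'v" where "v_of f = the_elem (f - VM)"
definition x_of :: "'v set \<Rightarrow> 'v" where "x_of f = the_elem (f \<inter> VM)"
definition edge_of :: "'v set \<Rightarrow> 'v set \<times> 'c" where
  "edge_of f = (THE p. p \<in> M \<and> x_of f \<in> fst p)"
definition m_of :: "'v set \<Rightarrow> 'v" where "m_of f = the_elem (fst (edge_of f) - {x_of f})"
definition colour_of :: "'v set \<Rightarrow> 'c" where "colour_of f = snd (edge_of f)"

lemma finite_V: "finite V" and finite_C: "finite C" and card_C: "card C = n"
  using multigraph unfolding nv_multigraph_def by auto

lemma clique_props: "Q \<in> K c \<Longrightarrow> Q \<subseteq> V \<and> 2 \<le> card Q \<and> c \<in> C"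
  using multigraph unfolding nv_multigraph_def by fastforce

lemma cliques_disjoint: "Q \<in> K c \<Longrightarrow> Q' \<in> K c \<Longrightarrow> Q \<noteq> Q' \<Longrightarrow> Q \<inter> Q' = {}"
  using multigraph clique_props unfolding nv_multigraph_def by metis

lemma colour_class_large: "c \<in> C \<Longrightarrow> w \<le> real (card (\<Union>(K c)))"
  using multigraph unfolding nv_multigraph_def by auto

lemma has_edge_in_V: "has_edge K c x y \<Longrightarrow> x \<in> V \<and> y \<in> V \<and> c \<in> C"
  unfolding has_edge_def using clique_props by blast

lemma rainbow_M: "rainbow_matching C K M"
  using max_M unfolding max_rainbow_matching_def by auto

lemma card_rainbow_le_card_M: "rainbow_matching C K M' \<Longrightarrow> card M' \<le> card M"
  using max_M unfolding max_rainbow_matching_def by auto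

lemma finite_M: "finite M"
  using finite_rainbow_matching[OF finite_C rainbow_M] .

lemma card_M_le: "card M \<le> n"
  using card_rainbow_matching_le[OF finite_C rainbow_M] card_C by simp

lemma VM_subset_V: "VM \<subseteq> V"
  unfolding matched_verts_def using rainbow_matching_edge[OF rainbow_M] has_edge_in_V by fastforce

lemma finite_VM: "finite VM"
  using VM_subset_V finite_V finite_subset by blast

lemma N_edgeD:
  assumes "f \<in> N"
  shows "f = {v_of f, x_of f}" "v_of f \<in> U" "x_of f \<in> VM"
    and "7 \<le> card {c \<in> C0. has_edge K c (v_of f) (x_of f)}"
proof -
  have "\<forall>f\<in>N. \<exists>u x. f = {u, x} \<and> u \<in> U \<and> x \<in> VM \<and>
      7 \<le> card {c \<in> C0. has_edge K c u x}"
    using aux_N unfolding aux_matching_def by (rule conjunct1)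
  then obtain u x where f: "f = {u, x}" "u \<in> U" "x \<in> VM" "7 \<le> card {c \<in> C0. has_edge K c u x}"
    using assms by blast
  then have "f - VM = {u}" "f \<inter> VM = {x}" by auto
  then have "v_of f = u" "x_of f = x" unfolding v_of_def x_of_def by auto
  with f show "f = {v_of f, x_of f}" "v_of f \<in> U" "x_of f \<in> VM"
    "7 \<le> card {c \<in> C0. has_edge K c (v_of f) (x_of f)}" by simp_all
qed

lemma mem_N_edge: "f \<in> N \<Longrightarrow> z \<in> f \<longleftrightarrow> z = v_of f \<or> z = x_of f"
  using N_edgeD(1) by (metis empty_iff insert_iff)

lemma edge_of_unique: "p \<in> M \<Longrightarrow> x_of f \<in> fst p \<Longrightarrow> edge_of f = p"
  unfolding edge_of_def
  by (rule the_equality) (use rainbow_matching_disjoint[OF rainbow_M] in blast)+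

lemma edge_ofD:
  assumes "f \<in> N"
  shows "edge_of f \<in> M" "fst (edge_of f) = {x_of f, m_of f}" "x_of f \<noteq> m_of f"
    and "has_edge K (colour_of f) (x_of f) (m_of f)"
proof -
  obtain p where p: "p \<in> M" "x_of f \<in> fst p"
    using N_edgeD(3)[OF assms] unfolding matched_verts_def by auto
  then have ep: "edge_of f = p" by (rule edge_of_unique)
  obtain y z where yz: "fst p = {y, z}" "has_edge K (snd p) y z"
    using rainbow_matching_edge[OF rainbow_M, of "fst p" "snd p"] p(1) by auto
  define y' where "y' = (if x_of f = y then z else y)"
  have p_eq: "fst p = {x_of f, y'}" and ne: "x_of f \<noteq> y'"
    using p(2) yz unfolding y'_def has_edge_def by auto
  have "has_edge K (snd p) (x_of f) y'"
    using yz p(2) has_edge_commute unfolding y'_def by (metis insert_iff singletonD)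
  moreover have "m_of f = y'"
    unfolding m_of_def ep p_eq using ne by (simp add: insert_Diff_if)
  ultimately show "edge_of f \<in> M" "fst (edge_of f) = {x_of f, m_of f}" "x_of f \<noteq> m_of f"
    "has_edge K (colour_of f) (x_of f) (m_of f)"
    using p(1) p_eq ne unfolding ep colour_of_def by simp_all
qed

lemma m_of_in_VM: "f \<in> N \<Longrightarrow> m_of f \<in> VM"
  using edge_ofD(1,2) unfolding matched_verts_def by (metis UnionI image_eqI insertCI)

lemma mates_subset_VM: "m_of ` N \<subseteq> VM"
  using m_of_in_VM by blast

lemma colour_of_in_M: "f \<in> N \<Longrightarrow> colour_of f \<in> colours M"
  using edge_ofD(1) unfolding colour_of_def colours_def by blast

lemma colour_of_in_C: "f \<in> N \<Longrightarrow> colour_of f \<in> C"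
  using colour_of_in_M rainbow_matching_colours[OF rainbow_M] by blast

lemma N_distinct:
  assumes "f \<in> N" "g \<in> N" "f \<noteq> g"
  shows "v_of f \<noteq> v_of g" "x_of f \<noteq> x_of g" "edge_of f \<noteq> edge_of g"
proof -
  have "\<forall>f\<in>N. \<forall>g\<in>N. f \<noteq> g \<longrightarrow> f \<inter> g = {}"
    and "\<forall>f\<in>N. \<forall>g\<in>N. f \<noteq> g \<longrightarrow> \<not> (\<exists>e\<in>fst ` M. f \<inter> e \<noteq> {} \<and> g \<inter> e \<noteq> {})"
    using aux_N unfolding aux_matching_def by (metis (no_types, lifting))+
  then have "f \<inter> g = {}" and no_common: "\<not> (\<exists>e\<in>fst ` M. f \<inter> e \<noteq> {} \<and> g \<inter> e \<noteq> {})"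
    using assms by blast+
  then show "v_of f \<noteq> v_of g" "x_of f \<noteq> x_of g"
    using N_edgeD(1)[OF assms(1)] N_edgeD(1)[OF assms(2)] by (metis disjoint_iff insertI1 insertI2)+
  show "edge_of f \<noteq> edge_of g"
  proof
    assume eq: "edge_of f = edge_of g"
    have "x_of f \<in> f \<inter> fst (edge_of f)" "x_of g \<in> g \<inter> fst (edge_of f)"
      using N_edgeD(1) edge_ofD(2) assms(1,2) eq by (metis IntI insertCI)+
    with no_common edge_ofD(1)[OF assms(1)] show False by blast
  qed
qed

lemma N_distinct_edges:
  assumes "f \<in> N" "g \<in> N" "f \<noteq> g"
  shows "colour_of f \<noteq> colour_of g" "{x_of f, m_of f} \<inter> {x_of g, m_of g} = {}"
  using rainbow_matching_disjoint[OF rainbow_M edge_ofD(1)[OF assms(1)] edge_ofD(1)[OF assms(2)]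
      N_distinct(3)[OF assms]]
  unfolding colour_of_def edge_ofD(2)[OF assms(1)] edge_ofD(2)[OF assms(2)] by simp_all

lemma inj_on_v_of: "inj_on v_of N"
  by (meson inj_onI N_distinct(1))

lemma inj_on_x_of: "inj_on x_of N"
  by (meson inj_onI N_distinct(2))

lemma inj_on_edge_of: "inj_on edge_of N"
  by (meson inj_onI N_distinct(3))

lemma inj_on_colour_of: "inj_on colour_of N"
  by (meson inj_onI N_distinct_edges(1))

lemma inj_on_m_of: "inj_on m_of N"
proof (rule inj_onI)
  fix f g assume "f \<in> N" "g \<in> N" "m_of f = m_of g"
  then show "f = g" using N_distinct_edges(2) by blast
qed

lemma finite_N: "finite N"
proof -
  have "v_of ` N \<subseteq> V" using N_edgeD(2) by blast
  then show ?thesis using finite_V inj_on_v_of finite_imageD finite_subset by blast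
qed

lemma x_of_ne_m_of: "t \<in> N \<Longrightarrow> s \<in> N \<Longrightarrow> x_of t \<noteq> m_of s"
  using edge_ofD(3) N_distinct_edges(2) by (cases "t = s") blast+

section \<open>Switching\<close>

lemma switch_colours:
  assumes "finite T" "T \<subseteq> N" "card T \<le> 7"
  shows "\<exists>c. inj_on c T \<and> (\<forall>t\<in>T. c t \<in> C0 \<and> has_edge K (c t) (v_of t) (x_of t))"
  using assms
proof (induction T rule: finite_induct)
  case empty
  then show ?case by simp
next
  case (insert t T)
  then obtain c where c: "inj_on c T" "\<forall>s\<in>T. c s \<in> C0 \<and> has_edge K (c s) (v_of s) (x_of s)"
    by auto
  define avail where "avail = {d \<in> C0. has_edge K d (v_of t) (x_of t)}"
  have tN: "t \<in> N" and "card T < 7"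
    using insert by auto
  then have "card (c ` T) < card avail"
    using card_image_le[OF insert(1), of c] N_edgeD(4)[OF tN] unfolding avail_def by linarith
  then obtain d where d: "d \<in> avail" "d \<notin> c ` T"
    by (metis card_mono finite_imageI insert(1) not_le subsetI)
  have "inj_on (c(t := d)) (insert t T)"
    using c(1) d(2) insert(2) by (auto simp: inj_on_def)
  moreover have "\<forall>s\<in>insert t T. (c(t := d)) s \<in> C0 \<and> has_edge K ((c(t := d)) s) (v_of s) (x_of s)"
    using c(2) d(1) insert(2) unfolding avail_def by auto
  ultimately show ?case by blast
qed

lemma switching_edges:
  assumes T: "T \<subseteq> N" "card T \<le> 7"
  obtains S where "rainbow_matching C K S" "matched_verts S = v_of ` T \<union> x_of ` T"
    and "colours S \<subseteq> C0" "card S = card T"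
proof -
  have fin_T: "finite T" using T(1) finite_N finite_subset by blast
  obtain c where c: "inj_on c T" "\<And>t. t \<in> T \<Longrightarrow> c t \<in> C0 \<and> has_edge K (c t) (v_of t) (x_of t)"
    using switch_colours[OF fin_T T] by blast
  define S where "S = (\<lambda>t. ({v_of t, x_of t}, c t)) ` T"
  have "rainbow_matching C K S"
  proof (rule rainbow_matchingI)
    fix e d assume "(e, d) \<in> S"
    then obtain t where "t \<in> T" "e = {v_of t, x_of t}" "d = c t" unfolding S_def by blast
    then show "d \<in> C \<and> (\<exists>x y. e = {x, y} \<and> has_edge K d x y)"
      using c(2) unfolding unused_colours_def by blast
  next
    fix p p' assume "p \<in> S" "p' \<in> S" "p \<noteq> p'"
    then obtain t t' where "t \<in> T" "t' \<in> T" "t \<noteq> t'"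
      and "p = ({v_of t, x_of t}, c t)" "p' = ({v_of t', x_of t'}, c t')"
      unfolding S_def by blast
    moreover have "v_of t \<in> U" "v_of t' \<in> U" "x_of t \<in> VM" "x_of t' \<in> VM"
      using calculation(1,2) T(1) N_edgeD(2,3) by blast+
    moreover have "v_of t \<noteq> v_of t'" "x_of t \<noteq> x_of t'" "c t \<noteq> c t'"
      using N_distinct(1,2) calculation(1-3) T(1) c(1) unfolding inj_on_def by blast+
    ultimately show "fst p \<inter> fst p' = {} \<and> snd p \<noteq> snd p'"
      by auto
  qed
  moreover have "matched_verts S = v_of ` T \<union> x_of ` T"
    unfolding S_def matched_verts_def by auto
  moreover have "colours S \<subseteq> C0" unfolding S_def colours_def using c(2) by auto
  moreover have "card S = card T"
    unfolding S_def using c(1) by (simp add: card_image inj_on_def)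
  ultimately show ?thesis by (rule that)
qed

lemma edge_of_image:
  assumes "X \<subseteq> N"
  shows "edge_of ` X \<subseteq> M" and "card (edge_of ` X) = card X"
    and "matched_verts (edge_of ` X) = x_of ` X \<union> m_of ` X"
    and "colours (edge_of ` X) = colour_of ` X"
proof -
  show "edge_of ` X \<subseteq> M" using assms edge_ofD(1) by blast
  show "card (edge_of ` X) = card X"
    using card_image[OF inj_on_subset[OF inj_on_edge_of assms]] .
  have "fst ` edge_of ` X = (\<lambda>f. {x_of f, m_of f}) ` X"
    unfolding image_image using assms edge_ofD(2) by (intro image_cong) auto
  then show "matched_verts (edge_of ` X) = x_of ` X \<union> m_of ` X"
    unfolding matched_verts_def by auto
  show "colours (edge_of ` X) = colour_of ` X"
    unfolding colours_def colour_of_def by (simp add: image_image)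
qed

definition freed_verts :: "'v set set \<Rightarrow> 'v set set \<Rightarrow> 'v set" where
  "freed_verts T A = (U - v_of ` T) \<union> m_of ` (T \<union> A) \<union> x_of ` A"

lemma switching_verts_disjoint:
  assumes T: "T \<subseteq> N" and A: "A \<subseteq> N" "T \<inter> A = {}"
  shows "matched_verts (M - edge_of ` (T \<union> A)) \<inter> (v_of ` T \<union> x_of ` T) = {}"
    and "(matched_verts (M - edge_of ` (T \<union> A)) \<union> v_of ` T \<union> x_of ` T) \<inter> freed_verts T A = {}"
proof -
  have TA: "T \<union> A \<subseteq> N" using T A by blast
  define VT XT XA MTA where "VT = v_of ` T" and "XT = x_of ` T" and "XA = x_of ` A"
    and "MTA = m_of ` (T \<union> A)"
  have vT: "VT \<subseteq> U" and xT: "XT \<subseteq> VM" and mTA: "MTA \<subseteq> VM" and xA: "XA \<subseteq> VM"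
    unfolding VT_def XT_def MTA_def XA_def using T TA A(1) N_edgeD(2,3) m_of_in_VM by blast+
  have xA_xT: "XA \<inter> XT = {}"
    unfolding XA_def XT_def using inj_on_image_Int[OF inj_on_x_of A(1) T] A(2) by auto
  have xT_mTA: "XT \<inter> MTA = {}"
  proof -
    have "x_of t \<noteq> m_of s" if "t \<in> T" "s \<in> T \<union> A" for t s
      using that TA T by (intro x_of_ne_m_of) auto
    then show ?thesis unfolding XT_def MTA_def by force
  qed
  have "matched_verts (edge_of ` (T \<union> A)) = XT \<union> XA \<union> MTA"
    using edge_of_image(3)[OF TA] unfolding XT_def XA_def MTA_def by (simp add: image_Un)
  then have MR: "matched_verts (M - edge_of ` (T \<union> A)) \<subseteq> VM - (XT \<union> XA \<union> MTA)"
    using matched_verts_Diff_disjoint[OF rainbow_M edge_of_image(1)[OF TA]]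
    by (auto simp: matched_verts_def)
  show "matched_verts (M - edge_of ` (T \<union> A)) \<inter> (v_of ` T \<union> x_of ` T) = {}"
    using MR vT xT unfolding VT_def[symmetric] XT_def[symmetric] by blast
  show "(matched_verts (M - edge_of ` (T \<union> A)) \<union> v_of ` T \<union> x_of ` T) \<inter> freed_verts T A = {}"
    using MR vT xT mTA xA xA_xT xT_mTA
    unfolding freed_verts_def VT_def[symmetric] XT_def[symmetric] XA_def[symmetric] MTA_def[symmetric]
    by blast
qed


(* Replacing the edges of M at x_t (t in T or A) by the edges v_t x_t (t in T), in distinct
   colours of C_0, and by E gives again a rainbow matching; maximality of M bounds |E|. *)
lemma switching_bound:
  assumes T: "T \<subseteq> N" "card T \<le> 7" and A: "A \<subseteq> N" "T \<inter> A = {}"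
    and E: "rainbow_matching C K E" "finite E"
    and E_colours: "colours E \<subseteq> colour_of ` (T \<union> A)"
    and E_verts: "matched_verts E \<subseteq> freed_verts T A"
  shows "card E \<le> card A"
proof -
  have TA: "T \<union> A \<subseteq> N" using T A by blast
  have fin_T: "finite T" and fin_A: "finite A" using T(1) A(1) finite_N finite_subset by blast+
  obtain S where S: "rainbow_matching C K S" "matched_verts S = v_of ` T \<union> x_of ` T"
    "colours S \<subseteq> C0" "card S = card T"
    using switching_edges[OF T] by blast
  define R where "R = edge_of ` (T \<union> A)"
  have R_M: "R \<subseteq> M" and card_R: "card R = card T + card A"
    and colours_R: "colours R = colour_of ` (T \<union> A)"
    using edge_of_image[OF TA] card_Un_disjoint[OF fin_T fin_A A(2)] unfolding R_def by simp_all
  have colours_MR: "colours (M - R) \<subseteq> colours M" and colours_R_M: "colours R \<subseteq> colours M"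
    unfolding colours_def using R_M by blast+
  have MR_S_colours: "colours (M - R) \<inter> colours S = {}"
    using S(3) colours_MR unused_colours_disjoint[of C M] by blast
  have MRS_E_colours: "colours ((M - R) \<union> S) \<inter> colours E = {}"
    using E_colours colours_Diff_disjoint[OF rainbow_M R_M] S(3) colours_R_M
      unused_colours_disjoint[of C M]
    unfolding colours_Un colours_R[symmetric] by blast
  have "rainbow_matching C K ((M - R) \<union> S)"
    using rainbow_matching_Un[OF rainbow_matching_subset[OF rainbow_M] S(1) _ MR_S_colours]
      switching_verts_disjoint(1)[OF T(1) A] unfolding S(2) R_def by blast
  then have MRSE_rainbow: "rainbow_matching C K ((M - R) \<union> S \<union> E)"
    using rainbow_matching_Un[OF _ E(1) _ MRS_E_colours] switching_verts_disjoint(2)[OF T(1) A]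
      E_verts unfolding matched_verts_Un S(2) R_def by blast
  have "card ((M - R) \<union> S \<union> E) = card (M - R) + card S + card E"
    using finite_M E(2) finite_rainbow_matching[OF finite_C S(1)] MR_S_colours MRS_E_colours
    by (simp add: card_Un_disjoint disjoint_if_colours_disjoint)
  moreover have "card (M - R) = card M - card R" and "card R \<le> card M"
    using card_Diff_subset[OF finite_subset[OF R_M finite_M] R_M] card_mono[OF finite_M R_M] by simp_all
  moreover have "card ((M - R) \<union> S \<union> E) \<le> card M"
    by (rule card_rainbow_le_card_M[OF MRSE_rainbow])
  ultimately show ?thesis using card_R S(4) by linarith
qed

section \<open>The colour class of an edge of N\<close>

definition joining_colours :: "'v set \<Rightarrow> 'c set" where
  "joining_colours a = {c \<in> colour_of ` N. has_edge K c (v_of a) (m_of a)}"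

definition joined_by :: "'v set \<Rightarrow> 'v set set" where
  "joined_by e = {a \<in> N. has_edge K (colour_of e) (v_of a) (m_of a)}"

definition sparsely_joined_by :: "'v set \<Rightarrow> 'v set set" where
  "sparsely_joined_by e = {a \<in> joined_by e. card (joining_colours a) \<le> 2}"

definition ends :: "'v set \<Rightarrow> 'v set" where
  "ends e = (U - {v_of e}) \<union> m_of ` N"

lemma card_mates_le: "finite P \<Longrightarrow> card (N \<inter> m_of -` P) \<le> card P"
  by (rule card_inj_on_le[OF inj_on_subset[OF inj_on_m_of]]) auto

lemma freed_vertI:
  assumes "q \<in> U \<union> m_of ` N"
    and "\<And>f. f \<in> N \<Longrightarrow> q = m_of f \<Longrightarrow> f \<in> T \<union> A" and "q \<in> U \<Longrightarrow> q \<notin> v_of ` T"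
  shows "q \<in> freed_verts T A"
  using assms unfolding freed_verts_def by blast

lemma ends_joined_pair:
  assumes e: "e \<in> N" and p: "p \<in> ends e" "p' \<in> ends e" and edge: "has_edge K (colour_of e) p p'"
  shows "\<exists>a\<in>N. {p, p'} = {v_of a, m_of a}"
proof (rule ccontr)
  assume no_pair: "\<not> (\<exists>a\<in>N. {p, p'} = {v_of a, m_of a})"
  define T where "T = insert e (N \<inter> m_of -` {p, p'})"
  have T_N: "T \<subseteq> N" unfolding T_def using e by blast
  have "card T \<le> Suc (card (N \<inter> m_of -` {p, p'}))"
    unfolding T_def by (simp add: card_insert_if finite_N)
  moreover have "card {p, p'} \<le> 2" by (cases "p = p'") auto
  ultimately have card_T: "card T \<le> 7" using card_mates_le[of "{p, p'}"] by simp
  have pp': "p \<noteq> p'" using edge unfolding has_edge_def by blast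
  have "q \<in> freed_verts T {}" if q: "q \<in> {p, p'}" for q
  proof (rule freed_vertI)
    show "q \<in> U \<union> m_of ` N" using q p unfolding ends_def by blast
    show "f \<in> T \<union> {}" if "f \<in> N" "q = m_of f" for f using q that unfolding T_def by simp
    assume qU: "q \<in> U"
    have "q \<noteq> v_of t" if "t \<in> N" "m_of t \<in> {p, p'}" for t
    proof
      assume "q = v_of t"
      moreover have "m_of t \<noteq> q" using qU m_of_in_VM[OF that(1)] by blast
      ultimately have "{p, p'} = {v_of t, m_of t}" using q that(2) pp' by blast
      then show False using no_pair that(1) by blast
    qed
    moreover have "q \<noteq> v_of e" using q p qU mates_subset_VM unfolding ends_def by blast
    ultimately show "q \<notin> v_of ` T" unfolding T_def by blast
  qed
  then have "card {({p, p'}, colour_of e)} \<le> card ({} :: 'v set set)"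
  proof (intro switching_bound[OF T_N card_T])
    show "rainbow_matching C K {({p, p'}, colour_of e)}"
      by (rule rainbow_matching_singleton[OF colour_of_in_C[OF e] edge])
    show "colours {({p, p'}, colour_of e)} \<subseteq> colour_of ` (T \<union> {})"
      unfolding colours_def T_def by simp
  qed (auto simp: matched_verts_def)
  then show False by simp
qed

lemma other_joining_edge:
  assumes "3 \<le> card (joining_colours a)"
  obtains b where "b \<in> N" "b \<noteq> e" "has_edge K (colour_of b) (v_of a) (m_of a)" "p \<noteq> v_of b"
proof -
  have fin_J: "finite (joining_colours a)" unfolding joining_colours_def using finite_N by simp
  have "2 \<le> card (joining_colours a - {colour_of e})"
    using assms card_Diff_singleton_if[of "joining_colours a" "colour_of e"] by (auto split: if_splits)
  then obtain c1 c2 where c12: "c1 \<in> joining_colours a" "c2 \<in> joining_colours a"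
      "c1 \<noteq> c2" "c1 \<noteq> colour_of e" "c2 \<noteq> colour_of e"
    by (metis (no_types, lifting) DiffE card_le_Suc0_iff_eq fin_J finite_Diff insertCI
        not_less_eq_eq numeral_2_eq_2)
  obtain b1 b2 where b12: "b1 \<in> N" "b2 \<in> N" "c1 = colour_of b1" "c2 = colour_of b2"
    using c12(1,2) unfolding joining_colours_def by blast
  then have "v_of b1 \<noteq> v_of b2" using c12(3) N_distinct(1) by blast
  then show ?thesis
    using that b12 c12 unfolding joining_colours_def by (metis (mono_tags, lifting) mem_Collect_eq)
qed

lemma no_edge_from_richly_joined:
  assumes e: "e \<in> N" and a: "a \<in> N" and rich: "3 \<le> card (joining_colours a)"
    and p: "p \<in> ends e" "p \<noteq> v_of a" "p \<noteq> m_of a"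
    and edge: "has_edge K (colour_of e) (x_of a) p"
  shows False
proof -
  obtain b where b: "b \<in> N" "b \<noteq> e" and edge_b: "has_edge K (colour_of b) (v_of a) (m_of a)"
    and pb: "p \<noteq> v_of b"
    using other_joining_edge[OF rich] by blast
  \<comment> \<open>Switch at e, b and the owner of p, and re-route the M-edge of a: it is replaced by
    v_a m(x_a) in colour c_b and x_a p in colour c_e.\<close>
  define T where "T = ({e, b} \<union> (N \<inter> m_of -` {p})) - {a}"
  have T_N: "T \<subseteq> N" and aT: "T \<inter> {a} = {}" unfolding T_def using e b(1) by blast+
  have "card T \<le> card ({e, b} \<union> (N \<inter> m_of -` {p}))"
    unfolding T_def using finite_N by (intro card_mono) auto
  also have "\<dots> \<le> card {e, b} + card (N \<inter> m_of -` {p})" by (rule card_Un_le)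
  also have "\<dots> \<le> 3" using card_mates_le[of "{p}"] by (cases "e = b") auto
  finally have card_T: "card T \<le> 7" by simp
  have va_U: "v_of a \<in> U" and xa_VM: "x_of a \<in> VM"
    using N_edgeD(2,3) a by blast+
  have colour_be: "colour_of b \<noteq> colour_of e" using N_distinct_edges(1) b e by blast
  define E where "E = {({v_of a, m_of a}, colour_of b), ({x_of a, p}, colour_of e)}"
  have "v_of a \<noteq> x_of a" using va_U xa_VM by (metis DiffD2)
  then have "{v_of a, m_of a} \<inter> {x_of a, p} = {}"
    using p(2,3) edge edge_ofD(3)[OF a] unfolding has_edge_def by auto
  moreover have "E = {({v_of a, m_of a}, colour_of b)} \<union> {({x_of a, p}, colour_of e)}"
    unfolding E_def by blast
  ultimately have E_rainbow: "rainbow_matching C K E"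
    using rainbow_matching_Un[OF rainbow_matching_singleton[OF colour_of_in_C[OF b(1)] edge_b]
        rainbow_matching_singleton[OF colour_of_in_C[OF e] edge]] colour_be
    by (simp add: matched_verts_def colours_def)
  have "p \<in> freed_verts T {a}"
  proof (rule freed_vertI)
    show "p \<in> U \<union> m_of ` N" using p(1) unfolding ends_def by blast
    show "f \<in> T \<union> {a}" if "f \<in> N" "p = m_of f" for f using that unfolding T_def by blast
    assume "p \<in> U"
    then have "N \<inter> m_of -` {p} = {}" and "p \<noteq> v_of e"
      using mates_subset_VM p(1) unfolding ends_def by blast+
    then show "p \<notin> v_of ` T" using pb unfolding T_def by blast
  qed
  moreover have "v_of a \<in> freed_verts T {a}"
    using va_U inj_on_image_mem_iff[OF inj_on_v_of a T_N] aT unfolding freed_verts_def by blast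
  ultimately have "matched_verts E \<subseteq> freed_verts T {a}"
    unfolding E_def matched_verts_def freed_verts_def by auto
  moreover have "colours E \<subseteq> colour_of ` (T \<union> {a})"
    unfolding E_def colours_def T_def by auto
  ultimately have "card E \<le> card {a}"
    using switching_bound[OF T_N card_T _ aT E_rainbow] a unfolding E_def by simp
  then show False unfolding E_def using colour_be by simp
qed

definition lonely :: "'v set \<Rightarrow> 'v set" where
  "lonely e = (\<Union>(K (colour_of e)) \<inter> ends e) - v_of ` joined_by e - m_of ` joined_by e"

lemma lonely_unique:
  assumes e: "e \<in> N" and p: "p \<in> lonely e" and p': "p' \<in> ends e"
    and Q: "Q \<in> K (colour_of e)" "p \<in> Q" "p' \<in> Q"
  shows "p' = p"
proof (rule ccontr)
  assume "p' \<noteq> p"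
  with Q have edge: "has_edge K (colour_of e) p p'" unfolding has_edge_def by blast
  have "p \<in> ends e" using p unfolding lonely_def by blast
  then obtain a where a: "a \<in> N" "{p, p'} = {v_of a, m_of a}"
    using ends_joined_pair[OF e _ p' edge] by blast
  then have "has_edge K (colour_of e) (v_of a) (m_of a)"
    using edge has_edge_commute by (metis doubleton_eq_iff)
  with a have "a \<in> joined_by e" "p \<in> {v_of a, m_of a}" unfolding joined_by_def by auto
  then show False using p unfolding lonely_def by blast
qed

lemma lonely_witness:
  assumes e: "e \<in> N" and p: "p \<in> lonely e"
  shows "\<exists>q \<in> insert (v_of e) (VM - m_of ` N - x_of ` (joined_by e - sparsely_joined_by e)).
           \<exists>Q\<in>K (colour_of e). p \<in> Q \<and> q \<in> Q"
proof -
  obtain Q where Q: "Q \<in> K (colour_of e)" "p \<in> Q" using p unfolding lonely_def by blast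
  then have "2 \<le> card Q" "Q \<subseteq> V" using clique_props by blast+
  then obtain q where q: "q \<in> Q" "q \<noteq> p"
    by (metis card_2_iff' card_le_Suc0_iff_eq ex_in_conv finite_subset finite_V not_less_eq_eq
        numeral_2_eq_2 Q(2))
  have q_V: "q \<in> V" using q(1) \<open>Q \<subseteq> V\<close> by blast
  have q_ends: "q \<notin> ends e" using lonely_unique[OF e p _ Q q(1)] q(2) by blast
  have "q \<notin> x_of ` (joined_by e - sparsely_joined_by e)"
  proof
    assume "q \<in> x_of ` (joined_by e - sparsely_joined_by e)"
    then obtain a where a: "a \<in> joined_by e" "a \<notin> sparsely_joined_by e" "q = x_of a" by blast
    have aN: "a \<in> N" using a(1) unfolding joined_by_def by blast
    have "3 \<le> card (joining_colours a)" using a(1,2) unfolding sparsely_joined_by_def by simp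
    moreover have "p \<in> ends e" "p \<noteq> v_of a" "p \<noteq> m_of a"
      using p a(1) unfolding lonely_def by blast+
    moreover have "has_edge K (colour_of e) (x_of a) p"
      using Q q a(3) unfolding has_edge_def by blast
    ultimately show False using no_edge_from_richly_joined[OF e aN] by blast
  qed
  with q_V q_ends have "q \<in> insert (v_of e) (VM - m_of ` N - x_of ` (joined_by e - sparsely_joined_by e))"
    unfolding ends_def by blast
  then show ?thesis using Q q(1) by blast
qed

lemma card_lonely_le:
  assumes e: "e \<in> N"
  shows "card (lonely e) + card (joined_by e - sparsely_joined_by e) \<le> 1 + card (VM - m_of ` N)"
proof -
  define J' where "J' = joined_by e - sparsely_joined_by e"
  define X where "X = VM - m_of ` N - x_of ` J'"
  have J'_N: "J' \<subseteq> N" unfolding J'_def joined_by_def by blast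
  \<comment> \<open>Charge each lonely vertex to another vertex of its clique; cliques of one colour are
    disjoint, and none contains two lonely vertices.\<close>
  have "card (lonely e) \<le> card (insert (v_of e) X)"
  proof (rule card_le_card_if_unique_witness[where R = "\<lambda>p q. \<exists>Q\<in>K (colour_of e). p \<in> Q \<and> q \<in> Q"])
    show "finite (insert (v_of e) X)" unfolding X_def using finite_VM by simp
    show "\<exists>q\<in>insert (v_of e) X. \<exists>Q\<in>K (colour_of e). p \<in> Q \<and> q \<in> Q" if "p \<in> lonely e" for p
      using lonely_witness[OF e that] unfolding X_def J'_def .
    fix p p' q assume pp': "p \<in> lonely e" "p' \<in> lonely e"
      and "\<exists>Q\<in>K (colour_of e). p \<in> Q \<and> q \<in> Q" "\<exists>Q\<in>K (colour_of e). p' \<in> Q \<and> q \<in> Q"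
    then obtain Q Q' where "Q \<in> K (colour_of e)" "Q' \<in> K (colour_of e)" "p \<in> Q" "q \<in> Q" "p' \<in> Q'" "q \<in> Q'"
      by blast
    then have "Q' = Q" "p' \<in> Q" using cliques_disjoint by blast+
    moreover have "p' \<in> ends e" using pp'(2) unfolding lonely_def by blast
    ultimately show "p = p'"
      using lonely_unique[OF e pp'(1) _ \<open>Q \<in> K (colour_of e)\<close> \<open>p \<in> Q\<close>] by simp
  qed
  also have "\<dots> \<le> Suc (card X)"
    by (rule card_insert_le_m1) simp_all
  finally have "card (lonely e) \<le> Suc (card X)" .
  moreover have sub: "x_of ` J' \<subseteq> VM - m_of ` N"
  proof
    fix z assume "z \<in> x_of ` J'"
    then obtain a where a: "a \<in> N" "z = x_of a" using J'_N by blast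
    then show "z \<in> VM - m_of ` N" using N_edgeD(3) x_of_ne_m_of[OF a(1)] by auto
  qed
  then have "card X = card (VM - m_of ` N) - card (x_of ` J')"
    unfolding X_def using finite_VM by (simp add: card_Diff_subset finite_subset)
  moreover have "card (x_of ` J') = card J'"
    using card_image[OF inj_on_subset[OF inj_on_x_of J'_N]] .
  moreover have "card (x_of ` J') \<le> card (VM - m_of ` N)"
    using sub finite_VM by (intro card_mono) auto
  ultimately show ?thesis unfolding J'_def by linarith
qed

lemma colour_class_cover:
  "\<Union>(K (colour_of e)) \<subseteq>
    insert (v_of e) ((VM - m_of ` N) \<union> (v_of ` joined_by e \<union> m_of ` joined_by e) \<union> lonely e)"
proof
  fix z assume z: "z \<in> \<Union>(K (colour_of e))"
  show "z \<in> insert (v_of e) ((VM - m_of ` N) \<union> (v_of ` joined_by e \<union> m_of ` joined_by e) \<union> lonely e)"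
  proof (cases "z \<in> ends e")
    case True
    then show ?thesis using z unfolding lonely_def by blast
  next
    case False
    moreover have "z \<in> V" using z clique_props by blast
    ultimately show ?thesis unfolding ends_def by blast
  qed
qed

lemma card_colour_class_le:
  assumes e: "e \<in> N"
  shows "card (\<Union>(K (colour_of e)))
    \<le> 2 * card (VM - m_of ` N) + card (joined_by e) + card (sparsely_joined_by e) + 2"
proof -
  define J where "J = joined_by e"
  define B where "B = (VM - m_of ` N) \<union> (v_of ` J \<union> m_of ` J) \<union> lonely e"
  have J_N: "J \<subseteq> N" unfolding J_def joined_by_def by blast
  have fin_J: "finite J" using finite_subset[OF J_N finite_N] .
  have "lonely e \<subseteq> V" using clique_props unfolding lonely_def by blast
  then have fin_B: "finite B" unfolding B_def using finite_VM fin_J finite_V finite_subset by blast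
  have "\<Union>(K (colour_of e)) \<subseteq> insert (v_of e) B"
    using colour_class_cover unfolding B_def J_def .
  then have "card (\<Union>(K (colour_of e))) \<le> card (insert (v_of e) B)"
    using fin_B by (intro card_mono) auto
  also have "\<dots> \<le> Suc (card B)"
    by (rule card_insert_le_m1) simp_all
  also have "card B \<le> card (VM - m_of ` N) + (card (v_of ` J) + card (m_of ` J)) + card (lonely e)"
    unfolding B_def by (meson add_mono card_Un_le order_trans le_refl)
  also have "card (v_of ` J) + card (m_of ` J) \<le> card J + card J"
    by (intro add_mono card_image_le fin_J)
  finally have "card (\<Union>(K (colour_of e))) \<le> Suc (card (VM - m_of ` N) + (card J + card J) + card (lonely e))"
    by simp
  moreover have "card (lonely e) + card (J - sparsely_joined_by e) \<le> 1 + card (VM - m_of ` N)"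
    using card_lonely_le[OF e] unfolding J_def .
  moreover have "card (J - sparsely_joined_by e) = card J - card (sparsely_joined_by e)"
    and "card (sparsely_joined_by e) \<le> card J"
    using fin_J unfolding J_def sparsely_joined_by_def
    by (simp_all add: card_Diff_subset card_mono finite_subset)
  ultimately show ?thesis unfolding J_def by linarith
qed

section \<open>Double counting\<close>

lemma M_N_eq: "M_N M N = edge_of ` N"
proof (intro set_eqI iffI)
  fix p assume "p \<in> M_N M N"
  then obtain f z where p: "p \<in> M" "f \<in> N" "z \<in> f" "z \<in> fst p"
    unfolding M_N_def by auto
  then have "z \<in> VM" unfolding matched_verts_def by blast
  then have "z = x_of f" using p(3) mem_N_edge[OF p(2)] N_edgeD(2)[OF p(2)] by auto
  then have "edge_of f = p" using edge_of_unique[OF p(1)] p(4) by simp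
  then show "p \<in> edge_of ` N" using p(2) by blast
next
  fix p assume "p \<in> edge_of ` N"
  then obtain f where f: "f \<in> N" "p = edge_of f" by blast
  then have "p \<in> M" "x_of f \<in> f" "x_of f \<in> fst p"
    using edge_ofD(1,2) mem_N_edge by auto
  then show "p \<in> M_N M N" using f(1) unfolding M_N_def by (cases p) auto
qed

lemma C_N_eq: "C_N M N = colour_of ` N"
  unfolding C_N_def M_N_eq colour_of_def by (simp add: image_image)

lemma N_alpha_eq:
  "N_alpha \<alpha> K M N = {a \<in> N. real (card (joining_colours a)) \<le> \<alpha> * real (card N)}"
proof -
  have card_C_N: "card (C_N M N) = card N"
    unfolding C_N_eq by (rule card_image[OF inj_on_colour_of])
  have "(\<exists>u x y. f = {u, x} \<and> u \<notin> VM \<and> {x, y} \<in> fst ` M \<and> x \<noteq> y \<and>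
          real (card {c \<in> C_N M N. has_edge K c u y}) \<le> \<alpha> * real (card (C_N M N)))
      \<longleftrightarrow> real (card (joining_colours f)) \<le> \<alpha> * real (card N)" if f: "f \<in> N" for f
  proof
    assume "\<exists>u x y. f = {u, x} \<and> u \<notin> VM \<and> {x, y} \<in> fst ` M \<and> x \<noteq> y \<and>
          real (card {c \<in> C_N M N. has_edge K c u y}) \<le> \<alpha> * real (card (C_N M N))"
    then obtain u x y where uxy: "f = {u, x}" "u \<notin> VM" "{x, y} \<in> fst ` M" "x \<noteq> y"
        "real (card {c \<in> C_N M N. has_edge K c u y}) \<le> \<alpha> * real (card (C_N M N))"
      by blast
    have "x \<in> VM" using uxy(3) unfolding matched_verts_def by blast
    moreover have "u \<in> f" "x \<in> f" using uxy(1) by simp_all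
    ultimately have u: "u = v_of f" and x: "x = x_of f"
      using uxy(2) mem_N_edge[OF f] N_edgeD(2,3)[OF f] by auto
    obtain p where p: "p \<in> M" "fst p = {x, y}" using uxy(3) by auto
    then have "edge_of f = p" using edge_of_unique x by simp
    then have "y = m_of f" using p(2) edge_ofD(2)[OF f] uxy(4) x by (metis doubleton_eq_iff)
    then show "real (card (joining_colours f)) \<le> \<alpha> * real (card N)"
      using uxy(5) u card_C_N unfolding joining_colours_def C_N_eq by simp
  next
    assume "real (card (joining_colours f)) \<le> \<alpha> * real (card N)"
    then have "real (card {c \<in> C_N M N. has_edge K c (v_of f) (m_of f)}) \<le> \<alpha> * real (card (C_N M N))"
      using card_C_N unfolding joining_colours_def C_N_eq by simp
    moreover have "{x_of f, m_of f} \<in> fst ` M" using edge_ofD(1,2)[OF f] by (metis image_eqI)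
    moreover have "v_of f \<notin> VM" using N_edgeD(2)[OF f] by blast
    ultimately show "\<exists>u x y. f = {u, x} \<and> u \<notin> VM \<and> {x, y} \<in> fst ` M \<and> x \<noteq> y \<and>
          real (card {c \<in> C_N M N. has_edge K c u y}) \<le> \<alpha> * real (card (C_N M N))"
      using N_edgeD(1)[OF f] edge_ofD(3)[OF f] by blast
  qed
  then show ?thesis unfolding N_alpha_def by blast
qed

lemma card_joining_colours:
  "card (joining_colours a) = card {e \<in> N. has_edge K (colour_of e) (v_of a) (m_of a)}"
proof -
  have "joining_colours a = colour_of ` {e \<in> N. has_edge K (colour_of e) (v_of a) (m_of a)}"
    unfolding joining_colours_def by blast
  moreover have "{e \<in> N. has_edge K (colour_of e) (v_of a) (m_of a)} \<subseteq> N" by blast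
  ultimately show ?thesis
    using card_image[OF inj_on_subset[OF inj_on_colour_of]] by simp
qed

lemma card_joining_colours_le: "card (joining_colours a) \<le> card N"
  unfolding card_joining_colours using finite_N by (intro card_mono) auto

lemma sum_card_joined_by: "(\<Sum>e\<in>N. card (joined_by e)) = (\<Sum>a\<in>N. card (joining_colours a))"
  unfolding joined_by_def card_joining_colours by (rule sum_card_filter_swap[OF finite_N finite_N])

lemma sum_card_sparsely_joined_by_le: "(\<Sum>e\<in>N. card (sparsely_joined_by e)) \<le> 2 * card N"
proof -
  have "(\<Sum>e\<in>N. card (sparsely_joined_by e)) =
      (\<Sum>a\<in>N. card {e \<in> N. has_edge K (colour_of e) (v_of a) (m_of a) \<and> card (joining_colours a) \<le> 2})"
  proof -
    have "sparsely_joined_by e =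
        {a \<in> N. has_edge K (colour_of e) (v_of a) (m_of a) \<and> card (joining_colours a) \<le> 2}" for e
      unfolding sparsely_joined_by_def joined_by_def by auto
    then show ?thesis by (simp only:) (rule sum_card_filter_swap[OF finite_N finite_N])
  qed
  also have "\<dots> \<le> (\<Sum>a\<in>N. 2)"
  proof (rule sum_mono)
    fix a assume "a \<in> N"
    show "card {e \<in> N. has_edge K (colour_of e) (v_of a) (m_of a) \<and> card (joining_colours a) \<le> 2} \<le> 2"
      using card_joining_colours[of a] by (cases "card (joining_colours a) \<le> 2") simp_all
  qed
  finally show ?thesis by simp
qed

lemma card_VM_eq: "card (VM - m_of ` N) + card N = card VM"
proof -
  have "card (VM - m_of ` N) = card VM - card (m_of ` N)"
    using mates_subset_VM finite_VM by (simp add: card_Diff_subset finite_subset)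
  moreover have "card (m_of ` N) = card N" by (rule card_image[OF inj_on_m_of])
  moreover have "card (m_of ` N) \<le> card VM" using mates_subset_VM finite_VM by (rule card_mono[rotated])
  ultimately show ?thesis by linarith
qed

lemma sum_card_colour_classes:
  "real (card N) * w
    \<le> real (card N) * (2 * real (card (VM - m_of ` N)) + 4) + real (\<Sum>a\<in>N. card (joining_colours a))"
proof -
  define L where "L = card (VM - m_of ` N)"
  have "real (card N) * w = (\<Sum>e\<in>N. w)" by simp
  also have "\<dots> \<le> (\<Sum>e\<in>N. real (2 * L + card (joined_by e) + card (sparsely_joined_by e) + 2))"
  proof (rule sum_mono)
    fix e assume e: "e \<in> N"
    have "w \<le> real (card (\<Union>(K (colour_of e))))" by (rule colour_class_large[OF colour_of_in_C[OF e]])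
    also have "\<dots> \<le> real (2 * L + card (joined_by e) + card (sparsely_joined_by e) + 2)"
      using card_colour_class_le[OF e] unfolding L_def by linarith
    finally show "w \<le> real (2 * L + card (joined_by e) + card (sparsely_joined_by e) + 2)" .
  qed
  also have "\<dots> = real (card N) * (2 * real L + 2)
      + real (\<Sum>e\<in>N. card (joined_by e)) + real (\<Sum>e\<in>N. card (sparsely_joined_by e))"
    by (simp add: sum.distrib algebra_simps)
  also have "\<dots> \<le> real (card N) * (2 * real L + 4) + real (\<Sum>a\<in>N. card (joining_colours a))"
  proof -
    have "real (\<Sum>e\<in>N. card (sparsely_joined_by e)) \<le> 2 * real (card N)"
      using sum_card_sparsely_joined_by_le by (metis of_nat_le_iff of_nat_mult of_nat_numeral)
    then show ?thesis unfolding sum_card_joined_by distrib_left by linarith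
  qed
  finally show ?thesis unfolding L_def .
qed

lemma sum_card_joining_colours_le:
  "real (\<Sum>a\<in>N. card (joining_colours a))
    \<le> \<alpha> * real (card N) * real (card (N_alpha \<alpha> K M N))
      + real (card N) * (real (card N) - real (card (N_alpha \<alpha> K M N)))"
proof -
  define A where "A = N_alpha \<alpha> K M N"
  have A_N: "A \<subseteq> N" unfolding A_def N_alpha_eq by blast
  have "real (\<Sum>a\<in>N. card (joining_colours a)) \<le> (\<Sum>a\<in>N. if a \<in> A then \<alpha> * real (card N) else real (card N))"
    unfolding of_nat_sum
  proof (rule sum_mono)
    fix a assume "a \<in> N"
    then show "real (card (joining_colours a)) \<le> (if a \<in> A then \<alpha> * real (card N) else real (card N))"
      using card_joining_colours_le[of a] unfolding A_def N_alpha_eq by simp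
  qed
  also have "\<dots> = \<alpha> * real (card N) * real (card A) + real (card N) * real (card (N - A))"
    using A_N finite_N by (simp add: sum.If_cases Int_absorb1 Diff_eq[symmetric] algebra_simps)
  also have "real (card (N - A)) = real (card N) - real (card A)"
    using A_N finite_N by (simp add: card_Diff_subset finite_subset card_mono of_nat_diff)
  finally show ?thesis unfolding A_def .
qed

lemma N_alpha_bound:
  assumes "N \<noteq> {}"
  shows "w + (1 - \<alpha>) * real (card (N_alpha \<alpha> K M N)) \<le> 4 * real (card M) - real (card N) + 4"
proof -
  define k L a where "k = real (card N)" and "L = real (card (VM - m_of ` N))"
    and "a = real (card (N_alpha \<alpha> K M N))"
  have "0 < k" unfolding k_def using assms finite_N by (simp add: card_gt_0_iff)
  moreover have "k * w \<le> k * (2 * L + 4) + (\<alpha> * k * a + k * (k - a))"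
    using sum_card_colour_classes sum_card_joining_colours_le[of \<alpha>] unfolding k_def L_def a_def by linarith
  ultimately have "k * (w + (1 - \<alpha>) * a) \<le> k * (2 * L + 4 + k)"
    by (simp add: algebra_simps)
  then have "w + (1 - \<alpha>) * a \<le> 2 * L + 4 + k"
    using \<open>0 < k\<close> by (rule mult_left_le_imp_le)
  moreover have "L + k \<le> 2 * real (card M)"
    using card_VM_eq card_matched_verts_le[OF finite_M rainbow_M] unfolding L_def k_def by linarith
  ultimately show ?thesis unfolding k_def a_def by linarith
qed

lemma card_N_alpha_le:
  assumes "w = (3 - \<gamma>) * real n" "0 \<le> \<gamma>" "(1 - \<gamma>) * real (card M) \<le> real (card N)"
  shows "(1 - \<alpha>) * real (card (N_alpha \<alpha> K M N)) \<le> 2 * \<gamma> * real n + 4"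
proof (cases "N = {}")
  case True
  then show ?thesis using assms(2) unfolding N_alpha_def by simp
next
  case False
  have "real (card M) \<le> real n" "\<gamma> * real (card M) \<le> \<gamma> * real n"
    using card_M_le assms(2) by (simp_all add: mult_left_mono)
  moreover have "real (card M) - \<gamma> * real (card M) \<le> real (card N)"
    using assms(3) by (simp add: left_diff_distrib)
  moreover have "3 * real n - \<gamma> * real n + (1 - \<alpha>) * real (card (N_alpha \<alpha> K M N))
      \<le> 4 * real (card M) - real (card N) + 4"
    using N_alpha_bound[OF False, of \<alpha>] unfolding assms(1) by (simp only: left_diff_distrib)
  ultimately show ?thesis by linarith
qed

end

theorem lemma2p9:
  fixes \<gamma> \<alpha> :: real
  assumes "\<gamma> > 0" and "0 < \<alpha>" and "\<alpha> < 1"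
  shows "\<exists>n0::nat. \<forall>n\<ge>n0. \<forall>(V::nat set) (C::nat set) (K::nat \<Rightarrow> nat set set)
            (M::(nat set \<times> nat) set) (N::nat set set).
     nv_multigraph V C K n ((3 - \<gamma>) * real n) \<and>
     max_rainbow_matching C K M \<and>
     aux_matching 7 V C K M N \<and>
     real (card N) \<ge> (1 - \<gamma>) * real (card M)
     \<longrightarrow> real (card (N_alpha \<alpha> K M N)) \<le> 20 * \<gamma> / (1 - \<alpha>) * real n"
proof (intro exI allI impI)
  fix n :: nat and V C :: "nat set" and K :: "nat \<Rightarrow> nat set set"
    and M :: "(nat set \<times> nat) set" and N :: "nat set set"
  assume n: "nat \<lceil>1 / \<gamma>\<rceil> \<le> n"
    and hyps: "nv_multigraph V C K n ((3 - \<gamma>) * real n) \<and> max_rainbow_matching C K M \<and>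
      aux_matching 7 V C K M N \<and> (1 - \<gamma>) * real (card M) \<le> real (card N)"
  interpret aux_matching_setting V C K M N n "(3 - \<gamma>) * real n"
    using hyps by unfold_locales blast+
  have "(1 - \<alpha>) * real (card (N_alpha \<alpha> K M N)) \<le> 2 * \<gamma> * real n + 4"
    using card_N_alpha_le[of \<gamma>] hyps assms(1) by simp
  moreover have "1 \<le> \<gamma> * real n"
    using n assms(1) by (simp add: field_simps)
  ultimately have "(1 - \<alpha>) * real (card (N_alpha \<alpha> K M N)) \<le> 20 * \<gamma> * real n"
    by linarith
  then show "real (card (N_alpha \<alpha> K M N)) \<le> 20 * \<gamma> / (1 - \<alpha>) * real n"
    using assms(3) by (simp add: field_simps)
qed

end
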